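(* Let $N\in\mathbb{N}$, $a\ge0$, $b>0$, $\alpha:=a+b-1$, $\beta:=b-1$, and let $z_1\le\dots\le z_N$ be the ordered zeros of the Jacobi polynomial $P_N^{(\alpha,\beta)}$. Let $\tilde S=(\tilde s_{i,j})_{i,j=1,\dots,N}$ be the matrix with $$\tilde s_{j,j}=4\sum_{l\ne j}\frac{1-z_j^2}{(z_j-z_l)^2}+2(a+b)\frac{1+z_j}{1-z_j}+2b\frac{1-z_j}{1+z_j},\qquad \tilde s_{i,j}=\frac{-4\sqrt{(1-z_j^2)(1-z_i^2)}}{(z_i-z_j)^2}\ (i\ne j).$$ Then $v_1:=(\sqrt{1-z_1^2},\dots,\sqrt{1-z_N^2})^T$ is an eigenvector of $\tilde S$ with eigenvalue $\lambda_1=2(2N+\alpha+\beta)$.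
   Context: $P_N^{(\alpha,\beta)}$ denotes the classical Jacobi polynomial of degree $N$, orthogonal on $]-1,1[$ with respect to the weight $(1-x)^\alpha(1+x)^\beta$; its zeros are simple and lie in $]-1,1[$. *)

theory Defs
  imports Complex_Main
begin

definition jacobi_poly :: "nat \<Rightarrow> real \<Rightarrow> real \<Rightarrow> real \<Rightarrow> real" where
  "jacobi_poly N al be x =
     (\<Sum>s\<le>N. ((of_nat N + al) gchoose (N - s)) * ((of_nat N + be) gchoose s)
              * ((x - 1) / 2) ^ s * ((x + 1) / 2) ^ (N - s))"

text \<open>The zeros of P_N^(al,be), listed in increasing order, indexed 0..N-1.\<close>
definition jacobi_zero :: "nat \<Rightarrow> real \<Rightarrow> real \<Rightarrow> nat \<Rightarrow> real" where
  "jacobi_zero N al be j = sorted_list_of_set {x. jacobi_poly N al be x = 0} ! j"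

definition S_tilde :: "nat \<Rightarrow> real \<Rightarrow> real \<Rightarrow> (nat \<Rightarrow> real) \<Rightarrow> nat \<Rightarrow> nat \<Rightarrow> real" where
  "S_tilde N a b z i j =
     (if i = j then
        4 * (\<Sum>l\<in>{..<N} - {j}. (1 - (z j)^2) / (z j - z l)^2)
        + 2 * (a + b) * (1 + z j) / (1 - z j) + 2 * b * (1 - z j) / (1 + z j)
      else - 4 * sqrt ((1 - (z j)^2) * (1 - (z i)^2)) / (z i - z j)^2)"

definition is_eigenvector :: "nat \<Rightarrow> (nat \<Rightarrow> nat \<Rightarrow> real) \<Rightarrow> (nat \<Rightarrow> real) \<Rightarrow> real \<Rightarrow> bool" where
  "is_eigenvector N M v lam \<longleftrightarrow>
     (\<exists>i<N. v i \<noteq> 0) \<and> (\<forall>i<N. (\<Sum>j<N. M i j * v j) = lam * v i)"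

end

theory Submission
  imports Defs "HOL-Computational_Algebra.Polynomial"
begin

(* The zeros z_1 < ... < z_N of P = P_N^(alpha,beta) are real, simple and lie in ]-1,1[: by Rolle's
   theorem between consecutive zeros of P_(N-1)^(alpha+1,beta+1) and the endpoints +-1, since
   (1-x)^(alpha+1) (1+x)^(beta+1) P_(N-1)^(alpha+1,beta+1) has derivative
   -2N (1-x)^alpha (1+x)^beta P(x).  Writing P = c * prod_l (x - z_l), one has
   P''(z_j) = 2 P'(z_j) * sum_(l ~= j) 1/(z_j - z_l) with P'(z_j) ~= 0, so the Jacobi differential
   equation (1-x^2) P'' + (beta - alpha - (alpha+beta+2) x) P' + N (N+alpha+beta+1) P = 0 gives
   the Stieltjes relations
     2 (1 - z_j^2) sum_(l ~= j) 1/(z_j - z_l) = (alpha+1)(1+z_j) - (beta+1)(1-z_j).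
   In row j of S v_1 the off-diagonal entries cancel the diagonal sum up to
   4 (N-1) - 8 z_j sum_(l ~= j) 1/(z_j - z_l), and the Stieltjes relation turns what is left
   into 2 (2N + alpha + beta). *)

section \<open>Polynomials with prescribed simple roots\<close>

lemma smult_sum_right: "smult c (sum f A) = (\<Sum>a\<in>A. smult c (f a))"
  by (induction A rule: infinite_finite_induct) (simp_all add: smult_add_right)

lemma pderiv_sum: "pderiv (sum f A) = (\<Sum>a\<in>A. pderiv (f a))"
  by (induction A rule: infinite_finite_induct) (simp_all add: pderiv_add)

lemma poly_eq_smult_prod_roots:
  fixes p :: "'a::idom poly"
  assumes "degree p \<le> n" "inj_on y {..<n}" "\<And>i. i < n \<Longrightarrow> poly p (y i) = 0"
  shows "p = smult (coeff p n) (\<Prod>i<n. [:- y i, 1:])"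
proof (rule poly_eqI_degree_lead_coeff[where A = "y ` {..<n}"])
  have deg: "degree (\<Prod>i<n. [:- y i, 1:]) = n"
    by (subst degree_prod_sum_eq) auto
  then show "coeff p n = coeff (smult (coeff p n) (\<Prod>i<n. [:- y i, 1:])) n"
    using lead_coeff_prod[of "\<lambda>i. [:- y i, 1:]" "{..<n}"] by simp
  show "degree (smult (coeff p n) (\<Prod>i<n. [:- y i, 1:])) \<le> n"
    using deg by simp
  show "n \<le> card (y ` {..<n})"
    using assms(2) by (simp add: card_image)
  show "poly p x = poly (smult (coeff p n) (\<Prod>i<n. [:- y i, 1:])) x" if "x \<in> y ` {..<n}" for x
    using that assms(3) by (auto simp: poly_prod)
qed (use assms in auto)

lemma poly_roots_eq_image:
  fixes p :: "'a::idom poly"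
  assumes "p \<noteq> 0" "degree p \<le> n" "inj_on y {..<n}" "\<And>i. i < n \<Longrightarrow> poly p (y i) = 0"
  shows "{x. poly p x = 0} = y ` {..<n}"
proof (rule card_seteq[symmetric])
  show "finite {x. poly p x = 0}"
    using assms(1) by (rule poly_roots_finite)
  show "y ` {..<n} \<subseteq> {x. poly p x = 0}"
    using assms(4) by auto
  have "card {x. poly p x = 0} \<le> degree p"
    using assms(1) by (rule card_poly_roots_bound)
  then show "card {x. poly p x = 0} \<le> card (y ` {..<n})"
    using assms(2,3) by (simp add: card_image)
qed

lemma poly_pderiv_prod_linear:
  fixes y :: "'a \<Rightarrow> 'b::field"
  assumes "finite A" "x \<notin> y ` A"
  shows "poly (pderiv (\<Prod>a\<in>A. [:- y a, 1:])) x = (\<Prod>a\<in>A. x - y a) * (\<Sum>a\<in>A. 1 / (x - y a))"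
proof -
  have "poly (pderiv (\<Prod>a\<in>A. [:- y a, 1:])) x = (\<Sum>a\<in>A. \<Prod>b\<in>A - {a}. x - y b)"
    by (simp add: pderiv_prod pderiv_pCons poly_sum poly_prod)
  also have "\<dots> = (\<Sum>a\<in>A. (\<Prod>b\<in>A. x - y b) * (1 / (x - y a)))"
  proof (rule sum.cong[OF refl])
    fix a assume a: "a \<in> A"
    then have "(\<Prod>b\<in>A. x - y b) = (x - y a) * (\<Prod>b\<in>A - {a}. x - y b)"
      using assms(1) by (simp add: prod.remove)
    then show "(\<Prod>b\<in>A - {a}. x - y b) = (\<Prod>b\<in>A. x - y b) * (1 / (x - y a))"
      using a assms(2) by auto
  qed
  finally show ?thesis
    by (simp add: sum_distrib_left)
qed

lemma simple_root_pderiv: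
  fixes y :: "nat \<Rightarrow> 'a::field"
  assumes "inj_on y {..<n}" "i < n" and p_eq: "p = smult c (\<Prod>l<n. [:- y l, 1:])"
  shows "poly (pderiv p) (y i) = c * (\<Prod>l\<in>{..<n} - {i}. y i - y l)"
    and "poly (pderiv (pderiv p)) (y i) = 2 * poly (pderiv p) (y i) * (\<Sum>l\<in>{..<n} - {i}. 1 / (y i - y l))"
proof -
  define Q where "Q = (\<Prod>l\<in>{..<n} - {i}. [:- y l, 1:])"
  have p: "p = smult c ([:- y i, 1:] * Q)"
    unfolding p_eq Q_def using assms(2) by (simp add: prod.remove)
  have "y i \<notin> y ` ({..<n} - {i})"
    using assms(1,2) by (auto dest: inj_onD)
  then have Q': "poly (pderiv Q) (y i) = poly Q (y i) * (\<Sum>l\<in>{..<n} - {i}. 1 / (y i - y l))"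
    unfolding Q_def by (simp add: poly_pderiv_prod_linear poly_prod)
  have lin: "pderiv [:- y i, 1:] = 1"
    by (simp add: pderiv_pCons)
  show p': "poly (pderiv p) (y i) = c * (\<Prod>l\<in>{..<n} - {i}. y i - y l)"
    unfolding p pderiv_smult pderiv_mult lin by (simp add: Q_def poly_prod)
  show "poly (pderiv (pderiv p)) (y i) = 2 * poly (pderiv p) (y i) * (\<Sum>l\<in>{..<n} - {i}. 1 / (y i - y l))"
    unfolding p' unfolding p pderiv_smult pderiv_mult pderiv_add lin
    using Q' by (simp add: Q_def poly_prod)
qed

section \<open>Jacobi polynomials\<close>

definition jacobi_coeff :: "nat \<Rightarrow> real \<Rightarrow> real \<Rightarrow> nat \<Rightarrow> real" where
  "jacobi_coeff n al be s = ((of_nat n + al) gchoose (n - s)) * ((of_nat n + be) gchoose s)"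

abbreviation jac_u :: "real poly" where "jac_u \<equiv> [:-1/2, 1/2:]"
abbreviation jac_v :: "real poly" where "jac_v \<equiv> [:1/2, 1/2:]"

definition jacobi :: "nat \<Rightarrow> real \<Rightarrow> real \<Rightarrow> real poly" where
  "jacobi n al be = (\<Sum>s\<le>n. smult (jacobi_coeff n al be s) (jac_u ^ s * jac_v ^ (n - s)))"

lemma poly_jacobi: "poly (jacobi n al be) = jacobi_poly n al be"
  by (auto simp: jacobi_def jacobi_poly_def jacobi_coeff_def poly_sum field_simps)

lemma degree_jacobi: "degree (jacobi n al be) \<le> n"
  unfolding jacobi_def
proof (intro degree_sum_le)
  fix s assume "s \<in> {..n}"
  have "degree (jac_u ^ s * jac_v ^ (n - s)) \<le> degree (jac_u ^ s) + degree (jac_v ^ (n - s))"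
    by (rule degree_mult_le)
  also have "\<dots> \<le> s + (n - s)"
    by (intro add_mono order.trans[OF degree_power_le]) auto
  finally show "degree (smult (jacobi_coeff n al be s) (jac_u ^ s * jac_v ^ (n - s))) \<le> n"
    using \<open>s \<in> {..n}\<close> by (simp add: order.trans[OF degree_smult_le])
qed simp

lemma poly_jacobi_one: "poly (jacobi n al be) 1 = (of_nat n + al) gchoose n"
proof -
  have "poly (jacobi n al be) 1 = (\<Sum>s\<le>n. if s = 0 then jacobi_coeff n al be s else 0)"
    unfolding jacobi_def poly_sum by (intro sum.cong) (auto simp: power_0_left)
  then show ?thesis
    by (simp add: jacobi_coeff_def)
qed

lemma jacobi_nonzero:
  assumes "al > -1"
  shows "jacobi n al be \<noteq> 0"
proof -
  have "(of_nat n + al) gchoose n > 0"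
    unfolding gbinomial_altdef_of_nat using assms by (intro prod_pos) auto
  then show ?thesis
    using poly_jacobi_one[of n al be] by auto
qed

lemma gbinomial_Suc_absorb:
  fixes a :: real
  shows "of_nat (Suc k) * (a gchoose Suc k) = (a - of_nat k) * (a gchoose k)"
  by (simp only: gbinomial_absorb_comp gbinomial_absorption)

lemma jacobi_coeff_shift:
  "jacobi_coeff m (al + 1) (be + 1) s = ((of_nat (Suc m) + al) gchoose (m - s)) * ((of_nat (Suc m) + be) gchoose s)"
  unfolding jacobi_coeff_def by (simp add: add_ac)

lemma jacobi_coeff_Suc_left:
  assumes "s \<le> m"
  shows "of_nat (Suc m - s) * jacobi_coeff (Suc m) al be s
           = (al + 1 + of_nat s) * jacobi_coeff m (al + 1) (be + 1) s"
proof -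
  let ?a = "of_nat (Suc m) + al" and ?b = "of_nat (Suc m) + be"
  have "of_nat (Suc m - s) * jacobi_coeff (Suc m) al be s
      = (of_nat (Suc (m - s)) * (?a gchoose Suc (m - s))) * (?b gchoose s)"
    using assms by (simp add: jacobi_coeff_def Suc_diff_le)
  also have "\<dots> = (?a - of_nat (m - s)) * (?a gchoose (m - s)) * (?b gchoose s)"
    by (simp only: gbinomial_Suc_absorb)
  also have "?a - of_nat (m - s) = al + 1 + of_nat s"
    using assms by (simp add: of_nat_diff)
  finally show ?thesis
    by (simp only: jacobi_coeff_shift mult.assoc)
qed

lemma jacobi_coeff_Suc_right:
  assumes "s \<le> m"
  shows "of_nat (Suc s) * jacobi_coeff (Suc m) al be (Suc s)
           = (of_nat (m - s) + be + 1) * jacobi_coeff m (al + 1) (be + 1) s"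
proof -
  let ?a = "of_nat (Suc m) + al" and ?b = "of_nat (Suc m) + be"
  have "of_nat (Suc s) * jacobi_coeff (Suc m) al be (Suc s)
      = (?a gchoose (m - s)) * (of_nat (Suc s) * (?b gchoose Suc s))"
    by (simp add: jacobi_coeff_def)
  also have "\<dots> = (?a gchoose (m - s)) * ((?b - of_nat s) * (?b gchoose s))"
    by (simp only: gbinomial_Suc_absorb)
  also have "?b - of_nat s = of_nat (m - s) + be + 1"
    using assms by (simp add: of_nat_diff)
  finally show ?thesis
    by (simp only: jacobi_coeff_shift mult_ac)
qed

section \<open>Derivative, lowering relation and differential equation\<close>

lemma pderiv_jacobi_monomial:
  "pderiv (jac_u ^ s * jac_v ^ r) =
     smult (of_nat s / 2) (jac_u ^ (s - 1) * jac_v ^ r) + smult (of_nat r / 2) (jac_u ^ s * jac_v ^ (r - 1))"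
  by (simp add: pderiv_mult pderiv_power pderiv_pCons algebra_simps)

lemma pderiv_jacobi:
  "pderiv (jacobi (Suc m) al be)
     = smult ((of_nat (Suc m) + al + be + 1) / 2) (jacobi m (al + 1) (be + 1))"
proof -
  define c where "c = jacobi_coeff (Suc m) al be"
  define d where "d = jacobi_coeff m (al + 1) (be + 1)"
  define K where "K = (of_nat (Suc m) + al + be + 1) / 2"
  define f where "f s = smult (c s * of_nat s / 2) (jac_u ^ (s - 1) * jac_v ^ (Suc m - s))" for s
  define g where "g s = smult (c s * of_nat (Suc m - s) / 2) (jac_u ^ s * jac_v ^ (m - s))" for s
  have "pderiv (jacobi (Suc m) al be) = (\<Sum>s\<le>Suc m. f s + g s)"
    unfolding jacobi_def pderiv_sum pderiv_smult pderiv_jacobi_monomial f_def g_def c_def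
    by (simp add: smult_add_right)
  also have "\<dots> = (\<Sum>s\<le>m. f (Suc s)) + (\<Sum>s\<le>m. g s)"
  proof -
    have "(\<Sum>s\<le>Suc m. f s) = (\<Sum>s\<le>m. f (Suc s))"
      by (subst sum.atMost_Suc_shift) (simp add: f_def)
    moreover have "(\<Sum>s\<le>Suc m. g s) = (\<Sum>s\<le>m. g s)"
      by (simp add: g_def)
    ultimately show ?thesis by (simp add: sum.distrib)
  qed
  also have "\<dots> = (\<Sum>s\<le>m. smult (K * d s) (jac_u ^ s * jac_v ^ (m - s)))"
    unfolding sum.distrib[symmetric]
  proof (rule sum.cong[OF refl])
    fix s assume "s \<in> {..m}"
    then have s: "s \<le> m" by simp
    have "c (Suc s) * of_nat (Suc s) / 2 + c s * of_nat (Suc m - s) / 2 = K * d s"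
      using jacobi_coeff_Suc_left[OF s, of al be] jacobi_coeff_Suc_right[OF s, of al be] s
      unfolding c_def d_def K_def by (simp add: of_nat_diff field_simps)
    moreover have "f (Suc s) + g s
        = smult (c (Suc s) * of_nat (Suc s) / 2 + c s * of_nat (Suc m - s) / 2) (jac_u ^ s * jac_v ^ (m - s))"
      unfolding f_def g_def smult_add_left by simp
    ultimately show "f (Suc s) + g s = smult (K * d s) (jac_u ^ s * jac_v ^ (m - s))"
      by simp
  qed
  also have "\<dots> = smult K (jacobi m (al + 1) (be + 1))"
    by (simp add: jacobi_def d_def smult_sum_right)
  finally show ?thesis unfolding K_def .
qed

lemma lowering_monomial_real:
  fixes u v al be :: real
  shows "-4 * u * v * (of_nat s / 2 * u ^ (s - 1) * v ^ r + of_nat r / 2 * u ^ s * v ^ (r - 1))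
     + (-2 * (be + 1) * u - 2 * (al + 1) * v) * (u ^ s * v ^ r)
   = -2 * (al + 1 + of_nat s) * u ^ s * v ^ Suc r - 2 * (of_nat r + be + 1) * u ^ Suc s * v ^ r"
  by (cases s; cases r) (simp_all add: field_simps)

lemma lowering_monomial:
  fixes U V :: "real poly"
  shows "smult (-4) (U * V) * (smult (of_nat s / 2) (U ^ (s - 1) * V ^ r) + smult (of_nat r / 2) (U ^ s * V ^ (r - 1)))
     + (smult (-2 * (be + 1)) U + smult (-2 * (al + 1)) V) * (U ^ s * V ^ r)
   = smult (-2 * (al + 1 + of_nat s)) (U ^ s * V ^ Suc r)
     + smult (-2 * (of_nat r + be + 1)) (U ^ Suc s * V ^ r)"
  apply (rule poly_ext)
  subgoal for x
    using lowering_monomial_real[of "poly U x" "poly V x" s r be al] by (simp add: algebra_simps)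
  done

lemma jacobi_lowering_term:
  assumes "s \<le> m"
  shows "smult (jacobi_coeff m (al + 1) (be + 1) s)
      (smult (-4) (jac_u * jac_v) * pderiv (jac_u ^ s * jac_v ^ (m - s))
        + (smult (-2 * (be + 1)) jac_u + smult (-2 * (al + 1)) jac_v) * (jac_u ^ s * jac_v ^ (m - s)))
    = smult (-2) (smult (of_nat (Suc m - s) * jacobi_coeff (Suc m) al be s) (jac_u ^ s * jac_v ^ (Suc m - s))
        + smult (of_nat (Suc s) * jacobi_coeff (Suc m) al be (Suc s)) (jac_u ^ Suc s * jac_v ^ (Suc m - Suc s)))"
proof -
  let ?d = "jacobi_coeff m (al + 1) (be + 1) s"
  have "?d * (-2 * (al + 1 + of_nat s)) = -2 * (of_nat (Suc m - s) * jacobi_coeff (Suc m) al be s)"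
    "?d * (-2 * (of_nat (m - s) + be + 1)) = -2 * (of_nat (Suc s) * jacobi_coeff (Suc m) al be (Suc s))"
    using jacobi_coeff_Suc_left[OF assms] jacobi_coeff_Suc_right[OF assms] by (simp_all add: algebra_simps)
  moreover have "Suc m - s = Suc (m - s)" "Suc m - Suc s = m - s"
    using assms by auto
  ultimately show ?thesis
    unfolding pderiv_jacobi_monomial lowering_monomial by (simp only: smult_add_right smult_smult)
qed

lemma jacobi_lowering:
  "[:1, 0, -1:] * pderiv (jacobi m (al + 1) (be + 1)) + [:be - al, - (al + be + 2):] * jacobi m (al + 1) (be + 1)
     = smult (-2 * of_nat (Suc m)) (jacobi (Suc m) al be)"
proof -
  define c where "c = jacobi_coeff (Suc m) al be"
  define d where "d = jacobi_coeff m (al + 1) (be + 1)"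
  define t where "t s r = jac_u ^ s * jac_v ^ r" for s r
  have quadratic: "[:1, 0, -1:] = smult (-4) (jac_u * jac_v)"
    by simp
  have linear: "[:be - al, - (al + be + 2):] = smult (-2 * (be + 1)) jac_u + smult (-2 * (al + 1)) jac_v"
    by (simp add: field_simps)
  have "[:1, 0, -1:] * pderiv (jacobi m (al + 1) (be + 1)) + [:be - al, - (al + be + 2):] * jacobi m (al + 1) (be + 1)
      = (\<Sum>s\<le>m. smult (d s) (smult (-4) (jac_u * jac_v) * pderiv (t s (m - s))
           + (smult (-2 * (be + 1)) jac_u + smult (-2 * (al + 1)) jac_v) * t s (m - s)))"
    unfolding linear quadratic jacobi_def pderiv_sum pderiv_smult d_def t_def
    by (simp add: sum_distrib_left sum.distrib smult_add_right)
  also have "\<dots> = smult (-2) ((\<Sum>s\<le>m. smult (of_nat (Suc m - s) * c s) (t s (Suc m - s)))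
      + (\<Sum>s\<le>m. smult (of_nat (Suc s) * c (Suc s)) (t (Suc s) (Suc m - Suc s))))"
    unfolding smult_sum_right sum.distrib[symmetric] smult_add_right[symmetric]
    unfolding c_def d_def t_def by (intro sum.cong refl jacobi_lowering_term) simp
  also have "\<dots> = smult (-2 * of_nat (Suc m)) (jacobi (Suc m) al be)"
  proof -
    have "(\<Sum>s\<le>m. smult (of_nat (Suc s) * c (Suc s)) (t (Suc s) (Suc m - Suc s)))
        = (\<Sum>s\<le>Suc m. smult (of_nat s * c s) (t s (Suc m - s)))"
      by (subst sum.atMost_Suc_shift) simp
    moreover have "(\<Sum>s\<le>m. smult (of_nat (Suc m - s) * c s) (t s (Suc m - s)))
        = (\<Sum>s\<le>Suc m. smult (of_nat (Suc m - s) * c s) (t s (Suc m - s)))"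
      by simp
    moreover have "(\<Sum>s\<le>Suc m. smult (of_nat (Suc m - s) * c s) (t s (Suc m - s)))
        + (\<Sum>s\<le>Suc m. smult (of_nat s * c s) (t s (Suc m - s)))
        = smult (of_nat (Suc m)) (\<Sum>s\<le>Suc m. smult (c s) (t s (Suc m - s)))"
      unfolding sum.distrib[symmetric] smult_sum_right smult_smult smult_add_left[symmetric]
      by (intro sum.cong) (auto simp: of_nat_diff algebra_simps)
    moreover have "jacobi (Suc m) al be = (\<Sum>s\<le>Suc m. smult (c s) (t s (Suc m - s)))"
      unfolding jacobi_def c_def t_def ..
    ultimately show ?thesis
      by simp
  qed
  finally show ?thesis .
qed

lemma jacobi_ode:
  "[:1, 0, -1:] * pderiv (pderiv (jacobi n al be)) + [:be - al, - (al + be + 2):] * pderiv (jacobi n al be)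
     = smult (- (of_nat n * (of_nat n + al + be + 1))) (jacobi n al be)"
proof (cases n)
  case 0
  then show ?thesis by (simp add: jacobi_def)
next
  case (Suc m)
  define K where "K = (of_nat (Suc m) + al + be + 1) / 2"
  have "[:1, 0, -1:] * pderiv (pderiv (jacobi n al be)) + [:be - al, - (al + be + 2):] * pderiv (jacobi n al be)
      = smult K ([:1, 0, -1:] * pderiv (jacobi m (al + 1) (be + 1)) + [:be - al, - (al + be + 2):] * jacobi m (al + 1) (be + 1))"
    unfolding Suc pderiv_jacobi pderiv_smult K_def by (simp add: smult_add_right)
  also have "\<dots> = smult (K * (-2 * of_nat (Suc m))) (jacobi n al be)"
    unfolding jacobi_lowering Suc by simp
  also have "K * (-2 * of_nat (Suc m)) = - (of_nat n * (of_nat n + al + be + 1))"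
    unfolding K_def Suc by (simp add: field_simps)
  finally show ?thesis .
qed

section \<open>Zeros\<close>

lemma sorted_list_of_set_image_strict_mono_on:
  assumes "strict_mono_on {..<n} y"
  shows "sorted_list_of_set (y ` {..<n}) = map y [0..<n]"
proof (subst sorted_list_of_set_unique[symmetric])
  show "finite (y ` {..<n})" by simp
  show "sorted_wrt (<) (map y [0..<n]) \<and> set (map y [0..<n]) = y ` {..<n} \<and> length (map y [0..<n]) = card (y ` {..<n})"
    using assms strict_mono_on_imp_inj_on[OF assms]
    by (auto simp: sorted_wrt_iff_nth_less card_image strict_mono_on_def)
qed

lemma jacobi_weighted_has_derivative:
  fixes x al be :: real
  assumes "-1 < x" "x < 1"
  shows "((\<lambda>x. (1 - x) powr (al + 1) * (1 + x) powr (be + 1) * poly (jacobi m (al + 1) (be + 1)) x)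
          has_real_derivative
            (1 - x) powr al * (1 + x) powr be * (-2 * of_nat (Suc m) * poly (jacobi (Suc m) al be) x)) (at x)"
proof -
  let ?R = "jacobi m (al + 1) (be + 1)"
    and ?A = "\<lambda>x. (1 - x) powr (al + 1)" and ?B = "\<lambda>x. (1 + x) powr (be + 1)"
  have pos: "1 - x > 0" "1 + x > 0"
    using assms by auto
  have "(?A has_real_derivative (al + 1) * (1 - x) powr (al + 1 - of_nat 1) * (-1)) (at x)"
    by (rule DERIV_fun_powr) (use pos in \<open>auto intro!: derivative_eq_intros\<close>)
  moreover have "(?B has_real_derivative (be + 1) * (1 + x) powr (be + 1 - of_nat 1) * 1) (at x)"
    by (rule DERIV_fun_powr) (use pos in \<open>auto intro!: derivative_eq_intros\<close>)
  ultimately have "((\<lambda>x. ?A x * ?B x * poly ?R x) has_real_derivative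
        ((al + 1) * (1 - x) powr (al + 1 - of_nat 1) * (-1) * ?B x + (be + 1) * (1 + x) powr (be + 1 - of_nat 1) * 1 * ?A x)
          * poly ?R x + poly (pderiv ?R) x * (?A x * ?B x)) (at x)"
    by (intro DERIV_mult poly_DERIV)
  moreover have "((al + 1) * (1 - x) powr (al + 1 - of_nat 1) * (-1) * ?B x + (be + 1) * (1 + x) powr (be + 1 - of_nat 1) * 1 * ?A x)
          * poly ?R x + poly (pderiv ?R) x * (?A x * ?B x)
      = (1 - x) powr al * (1 + x) powr be * poly ([:1, 0, -1:] * pderiv ?R + [:be - al, - (al + be + 2):] * ?R) x"
    using pos by (simp add: powr_add power2_eq_square algebra_simps)
  ultimately show ?thesis
    unfolding jacobi_lowering by simp
qed

lemma jacobi_root_between: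
  fixes a b al be :: real
  assumes al: "al > -1" and be: "be > -1" and ab: "-1 \<le> a" "a < b" "b \<le> 1"
    and a: "a = -1 \<or> poly (jacobi m (al + 1) (be + 1)) a = 0"
    and b: "b = 1 \<or> poly (jacobi m (al + 1) (be + 1)) b = 0"
  shows "\<exists>w. a < w \<and> w < b \<and> poly (jacobi (Suc m) al be) w = 0"
proof -
  define F where "F x = (1 - x) powr (al + 1) * (1 + x) powr (be + 1) * poly (jacobi m (al + 1) (be + 1)) x" for x
  have "continuous_on {a..b} F"
    unfolding F_def using ab al be by (intro continuous_intros continuous_on_powr') auto
  moreover have "F a = 0" "F b = 0"
    using a b by (auto simp: F_def)
  moreover have der: "(F has_real_derivative (1 - x) powr al * (1 + x) powr be
      * (-2 * of_nat (Suc m) * poly (jacobi (Suc m) al be) x)) (at x)" if "a < x" "x < b" for x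
    unfolding F_def using that ab by (intro jacobi_weighted_has_derivative) auto
  ultimately obtain w where w: "a < w" "w < b" "(F has_real_derivative 0) (at w)"
    using Rolle[of a b F] ab(2) by (metis real_differentiable_def)
  then have "(1 - w) powr al * (1 + w) powr be * (-2 * of_nat (Suc m) * poly (jacobi (Suc m) al be) w) = 0"
    using DERIV_unique der by blast
  then show ?thesis
    using w ab by auto
qed

lemma jacobi_distinct_roots:
  assumes "al > -1" "be > -1"
  shows "\<exists>y. strict_mono_on {..<n} y \<and> (\<forall>i<n. -1 < y i \<and> y i < 1 \<and> poly (jacobi n al be) (y i) = 0)"
  using assms
proof (induction n arbitrary: al be)
  case 0
  then show ?case by (auto simp: strict_mono_on_def)
next
  case (Suc m)
  obtain y where y_mono: "strict_mono_on {..<m} y"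
    and y: "\<forall>i<m. -1 < y i \<and> y i < 1 \<and> poly (jacobi m (al + 1) (be + 1)) (y i) = 0"
    using Suc.IH[of "al + 1" "be + 1"] Suc.prems by auto
  define Y where "Y i = (if i = 0 then -1 else if i \<le> m then y (i - 1) else 1)" for i
  have Y_mono: "Y i < Y j" if "i < j" "j \<le> Suc m" for i j
    using that y strict_mono_onD[OF y_mono, of "i - 1" "j - 1"] unfolding Y_def by auto
  have Y_range: "-1 \<le> Y i \<and> Y i \<le> 1" for i
    using y unfolding Y_def by (auto simp: less_imp_le)
  have Y_root: "Y i = -1 \<or> poly (jacobi m (al + 1) (be + 1)) (Y i) = 0"
      "Y (Suc i) = 1 \<or> poly (jacobi m (al + 1) (be + 1)) (Y (Suc i)) = 0" if "i \<le> m" for i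
    using that y unfolding Y_def by auto
  have "\<forall>i<Suc m. \<exists>w. Y i < w \<and> w < Y (Suc i) \<and> poly (jacobi (Suc m) al be) w = 0"
  proof (intro allI impI)
    fix i assume "i < Suc m"
    then show "\<exists>w. Y i < w \<and> w < Y (Suc i) \<and> poly (jacobi (Suc m) al be) w = 0"
      using jacobi_root_between[OF Suc.prems, of "Y i" "Y (Suc i)"] Y_range Y_mono[of i "Suc i"] Y_root[of i]
      by auto
  qed
  then obtain w where w: "\<forall>i<Suc m. Y i < w i \<and> w i < Y (Suc i) \<and> poly (jacobi (Suc m) al be) (w i) = 0"
    by metis
  have "strict_mono_on {..<Suc m} w"
  proof (rule strict_mono_onI)
    fix i j assume ij: "i \<in> {..<Suc m}" "j \<in> {..<Suc m}" "i < j"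
    have "Y (Suc i) \<le> Y j"
      using Y_mono[of "Suc i" j] ij by (cases "Suc i = j") auto
    moreover have "w i < Y (Suc i)" "Y j < w j"
      using w ij by auto
    ultimately show "w i < w j" by linarith
  qed
  moreover have "-1 < w i \<and> w i < 1 \<and> poly (jacobi (Suc m) al be) (w i) = 0" if "i < Suc m" for i
    using w that Y_range[of i] Y_range[of "Suc i"] by fastforce
  ultimately show ?case by blast
qed

lemma jacobi_stieltjes:
  assumes "al > -1" "inj_on y {..<n}" "\<And>i. i < n \<Longrightarrow> poly (jacobi n al be) (y i) = 0" "i < n"
  shows "2 * (1 - (y i)^2) * (\<Sum>l\<in>{..<n} - {i}. 1 / (y i - y l)) = (al + 1) * (1 + y i) - (be + 1) * (1 - y i)"
proof -
  define P where "P = jacobi n al be"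
  define S where "S = (\<Sum>l\<in>{..<n} - {i}. 1 / (y i - y l))"
  define c where "c = coeff P n"
  have P: "P = smult c (\<Prod>l<n. [:- y l, 1:])"
    unfolding P_def c_def using degree_jacobi assms(2,3) by (rule poly_eq_smult_prod_roots)
  then have "c \<noteq> 0"
    using jacobi_nonzero[OF assms(1)] unfolding P_def by auto
  moreover have "y i \<noteq> y l" if "l \<in> {..<n} - {i}" for l
    using that assms(2,4) by (auto dest: inj_onD)
  ultimately have P'_nonzero: "poly (pderiv P) (y i) \<noteq> 0"
    using simple_root_pderiv(1)[OF assms(2,4) P] by simp
  have P'': "poly (pderiv (pderiv P)) (y i) = 2 * poly (pderiv P) (y i) * S"
    unfolding S_def by (rule simple_root_pderiv(2)[OF assms(2,4) P])
  have "poly ([:1, 0, -1:] * pderiv (pderiv P) + [:be - al, - (al + be + 2):] * pderiv P) (y i) = 0"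
    unfolding P_def jacobi_ode using assms(3,4) by simp
  then have "poly (pderiv P) (y i) * (2 * (1 - (y i)^2) * S + (be - al - (al + be + 2) * y i)) = 0"
    by (simp add: P'' power2_eq_square algebra_simps)
  with P'_nonzero have "2 * (1 - (y i)^2) * S + (be - al - (al + be + 2) * y i) = 0"
    by simp
  then show ?thesis
    unfolding S_def by (simp add: algebra_simps)
qed

section \<open>The matrix S-tilde\<close>

lemma div_sq_diff_div_sq:
  fixes x y :: real
  assumes "x \<noteq> y"
  shows "(1 - x^2) / (x - y)^2 - (1 - y^2) / (x - y)^2 = 1 - 2 * x * (1 / (x - y))"
proof -
  have "(1 - x^2) / (x - y)^2 - (1 - y^2) / (x - y)^2
      = ((x - y) * (x - y) - 2 * x * (x - y)) / ((x - y) * (x - y))"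
    by (simp add: diff_divide_distrib[symmetric] power2_eq_square algebra_simps)
  also have "\<dots> = 1 - 2 * x * (1 / (x - y))"
    using assms by (simp add: diff_divide_distrib)
  finally show ?thesis .
qed

lemma S_tilde_row_sum:
  assumes "inj_on z {..<N}" "\<And>j. j < N \<Longrightarrow> \<bar>z j\<bar> \<le> 1" "i < N"
  shows "(\<Sum>j<N. S_tilde N a b z i j * sqrt (1 - (z j)^2))
    = sqrt (1 - (z i)^2) * (4 * (real N - 1) - 8 * z i * (\<Sum>l\<in>{..<N} - {i}. 1 / (z i - z l))
        + 2 * (a + b) * (1 + z i) / (1 - z i) + 2 * b * (1 - z i) / (1 + z i))"
proof -
  define v where "v j = sqrt (1 - (z j)^2)" for j
  define L where "L = {..<N} - {i}"
  define E where "E = 2 * (a + b) * (1 + z i) / (1 - z i) + 2 * b * (1 - z i) / (1 + z i)"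
  have z_ne: "z i \<noteq> z l" if "l \<in> L" for l
    using that assms(1,3) unfolding L_def by (auto dest: inj_onD)
  have off_diag: "S_tilde N a b z i j * v j = - 4 * v i * ((1 - (z j)^2) / (z i - z j)^2)" if "j \<in> L" for j
  proof -
    have "v j * v j = 1 - (z j)^2"
      using assms(2)[of j] that unfolding v_def L_def by (simp add: abs_square_le_1)
    moreover have "sqrt ((1 - (z j)^2) * (1 - (z i)^2)) = v j * v i"
      unfolding v_def by (simp add: real_sqrt_mult)
    ultimately show ?thesis
      using that unfolding S_tilde_def L_def by auto
  qed
  have "(\<Sum>j<N. S_tilde N a b z i j * v j) = S_tilde N a b z i i * v i + (\<Sum>j\<in>L. S_tilde N a b z i j * v j)"
    unfolding L_def using assms(3) by (subst sum.remove) auto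
  also have "(\<Sum>j\<in>L. S_tilde N a b z i j * v j) = - 4 * v i * (\<Sum>l\<in>L. (1 - (z l)^2) / (z i - z l)^2)"
    by (simp add: off_diag sum_distrib_left)
  also have "S_tilde N a b z i i = 4 * (\<Sum>l\<in>L. (1 - (z i)^2) / (z i - z l)^2) + E"
    unfolding S_tilde_def L_def E_def by simp
  finally have "(\<Sum>j<N. S_tilde N a b z i j * v j)
      = v i * (4 * ((\<Sum>l\<in>L. (1 - (z i)^2) / (z i - z l)^2) - (\<Sum>l\<in>L. (1 - (z l)^2) / (z i - z l)^2)) + E)"
    by (simp add: algebra_simps)
  also have "(\<Sum>l\<in>L. (1 - (z i)^2) / (z i - z l)^2) - (\<Sum>l\<in>L. (1 - (z l)^2) / (z i - z l)^2)
      = (\<Sum>l\<in>L. 1 - 2 * z i * (1 / (z i - z l)))"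
    unfolding sum_subtractf[symmetric] by (intro sum.cong refl div_sq_diff_div_sq z_ne)
  also have "\<dots> = real (N - 1) - 2 * z i * (\<Sum>l\<in>L. 1 / (z i - z l))"
    unfolding sum_subtractf sum_distrib_left[symmetric] using assms(3) by (simp add: L_def)
  finally show ?thesis
    unfolding v_def L_def E_def using assms(3) by (simp add: of_nat_diff algebra_simps)
qed

lemma stieltjes_eigenvalue_arith:
  fixes x T a b n :: real
  assumes "-1 < x" "x < 1" and T: "2 * (1 - x^2) * T = (a + b) * (1 + x) - b * (1 - x)"
  shows "4 * (n - 1) - 8 * x * T + 2 * (a + b) * (1 + x) / (1 - x) + 2 * b * (1 - x) / (1 + x)
    = 2 * (2 * n + (a + b - 1) + (b - 1))"
proof -
  define A B where "A = inverse (1 - x)" and "B = inverse (1 + x)"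
  have "A * (1 - x) = 1" "B * (1 + x) = 1"
    using assms(1,2) by (auto simp: A_def B_def)
  then have "4 * (n - 1) - 8 * x * T + 2 * (a + b) * (1 + x) * A + 2 * b * (1 - x) * B
      = 2 * (2 * n + (a + b - 1) + (b - 1))"
    using T by algebra
  then show ?thesis
    by (simp add: A_def B_def divide_inverse)
qed

lemma S_tilde_eigenvector:
  assumes "N \<ge> 1" "inj_on z {..<N}" "\<And>j. j < N \<Longrightarrow> -1 < z j \<and> z j < 1"
    and stieltjes: "\<And>i. i < N \<Longrightarrow>
      2 * (1 - (z i)^2) * (\<Sum>l\<in>{..<N} - {i}. 1 / (z i - z l)) = (a + b) * (1 + z i) - b * (1 - z i)"
  shows "is_eigenvector N (S_tilde N a b z) (\<lambda>i. sqrt (1 - (z i)^2)) (2 * (2 * real N + (a + b - 1) + (b - 1)))"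
  unfolding is_eigenvector_def
proof (intro conjI allI impI)
  have "(z 0)^2 < 1"
    using assms(1) assms(3)[of 0] by (simp add: abs_square_less_1 abs_less_iff)
  then show "\<exists>i<N. sqrt (1 - (z i)^2) \<noteq> 0"
    using assms(1) by (intro exI[of _ 0]) auto
next
  fix i assume i: "i < N"
  have "\<bar>z j\<bar> \<le> 1" if "j < N" for j
    using assms(3)[OF that] by auto
  then show "(\<Sum>j<N. S_tilde N a b z i j * sqrt (1 - (z j)^2))
      = 2 * (2 * real N + (a + b - 1) + (b - 1)) * sqrt (1 - (z i)^2)"
    using S_tilde_row_sum[OF assms(2) _ i, of a b] assms(3)[OF i]
      stieltjes_eigenvalue_arith[OF _ _ stieltjes[OF i], of "real N"]
    by simp
qed

theorem lemma3p3:
  fixes N :: nat and a b :: real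
  assumes "N \<ge> 1" and "a \<ge> 0" and "b > 0"
  defines "al \<equiv> a + b - 1" and "be \<equiv> b - 1"
  defines "z \<equiv> jacobi_zero N al be"
  shows "is_eigenvector N (S_tilde N a b z) (\<lambda>i. sqrt (1 - (z i)^2)) (2 * (2 * real N + al + be))"
proof -
  have al: "al > -1" and be: "be > -1"
    unfolding al_def be_def using assms by auto
  obtain y where y_mono: "strict_mono_on {..<N} y"
    and y: "\<And>i. i < N \<Longrightarrow> -1 < y i \<and> y i < 1 \<and> poly (jacobi N al be) (y i) = 0"
    using jacobi_distinct_roots[OF al be] by blast
  have inj: "inj_on y {..<N}"
    using y_mono by (rule strict_mono_on_imp_inj_on)
  have "{x. jacobi_poly N al be x = 0} = y ` {..<N}"
    using poly_roots_eq_image[OF jacobi_nonzero[OF al] degree_jacobi inj] y by (simp add: poly_jacobi)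
  then have z_y: "z i = y i" if "i < N" for i
    using that unfolding z_def jacobi_zero_def by (simp add: sorted_list_of_set_image_strict_mono_on[OF y_mono])
  have "is_eigenvector N (S_tilde N a b z) (\<lambda>i. sqrt (1 - (z i)^2)) (2 * (2 * real N + (a + b - 1) + (b - 1)))"
  proof (rule S_tilde_eigenvector)
    show "inj_on z {..<N}"
      using inj by (simp add: inj_on_def z_y)
    show "-1 < z j \<and> z j < 1" if "j < N" for j
      using y[OF that] z_y[OF that] by simp
    show "2 * (1 - (z i)^2) * (\<Sum>l\<in>{..<N} - {i}. 1 / (z i - z l)) = (a + b) * (1 + z i) - b * (1 - z i)"
      if "i < N" for i
      using jacobi_stieltjes[where be = be, OF al inj _ that] y that unfolding al_def be_def by (simp add: z_y)
  qed (use assms(1) in auto)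
  then show ?thesis
    unfolding al_def be_def .
qed

end
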